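(* Let $r,i,m$ be positive integers with $\gcd(r-i,2^m+1)=1$ and $\gcd(r,i(2^m-1))=1$, and let $b\in\mathbb{F}_{2^{2m}}^*$ satisfy $b^{\frac{2^{2m}-1}{\gcd(i(2^m-1),\,2^{2m}-1)}}\neq 1$ and $b^{2^m+1}=1$. Then the polynomial \[ f(x)=x^{i(2^m-1)+r}+bx^r \] induces a bijection of $\mathbb{F}_{2^{2m}}^*$ (and hence is a permutation polynomial of $\mathbb{F}_{2^{2m}}$).
   Context: A polynomial is a permutation polynomial of a finite field if it induces a bijection of that field. *)

theory Defs
  imports "HOL-Computational_Algebra.Polynomial"
begin

definition permutation_polynomial :: "'a::{finite,field} poly \<Rightarrow> bool" where
  "permutation_polynomial p \<longleftrightarrow> bij (poly p)"

end

(*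
  Write q = 2^m and u = x^(q-1) for x \<noteq> 0, so that u^(q+1) = 1 and
  f(x) = x^r h(u) with h(u) = u^i + b.  The hypothesis on b says that b is not an i(q-1)-th
  power, hence h(u) \<noteq> 0.  Since both u^i and b lie on the "unit circle" {w. w^(q+1) = 1},
  where the Frobenius w \<mapsto> w^q acts as inversion, h(u)^q = h(u) / (u^i b), so
  f(x)^(q-1) = u^r h(u)^(q-1) = u^(r-i) / b.  Thus f(x) = f(y) forces (u/v)^(r-i) = 1 and
  (u/v)^(q+1) = 1, whence u = v by gcd(r-i, q+1) = 1; then x^r = y^r and (x/y)^(q-1) = 1
  give x = y by gcd(r, q-1) = 1.
*)

theory Submission
  imports Defs "HOL-Computational_Algebra.Primes"
begin

lemma finite_field_power_card_minus_one:
  fixes x :: "'a::{finite,field}"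
  assumes "x \<noteq> 0"
  shows "x ^ (card (UNIV :: 'a set) - 1) = 1"
proof -
  have "(\<Prod>y\<in>UNIV-{0}. x * y) = (\<Prod>y\<in>UNIV-{0::'a}. y)"
    by (rule prod.reindex_bij_witness[of _ "\<lambda>y. y / x" "\<lambda>y. x * y"]) (use assms in auto)
  then have "x ^ card (UNIV - {0::'a}) * (\<Prod>y\<in>UNIV-{0::'a}. y) = (\<Prod>y\<in>UNIV-{0::'a}. y)"
    by (simp add: prod.distrib)
  then show ?thesis
    by (simp add: card_Diff_singleton)
qed

lemma CHAR_eq_2_if_even_card:
  assumes "even (card (UNIV :: 'a::{finite,field} set))"
  shows "CHAR('a) = 2"
proof (rule CHAR_eq_posI)
  have "odd (card (UNIV :: 'a set) - 1)"
    using assms finite_UNIV_card_ge_0[where 'a = 'a] by simp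
  then have "(-1 :: 'a) = 1"
    using finite_field_power_card_minus_one[of "-1 :: 'a"] by simp
  then show "of_nat 2 = (0 :: 'a)"
    by (metis add_eq_0_iff of_nat_1 of_nat_add one_add_one)
qed (auto simp: less_2_cases_iff)

lemma power_int_eq_one_if_coprime:
  fixes t :: "'a::field"
  assumes "t \<noteq> 0" "t powi k = 1" "t powi l = 1" "coprime k l"
  shows "t = 1"
proof -
  obtain u v where "u * k + v * l = 1"
    using bezout_int[of k l] assms(4) by auto
  then have "t = t powi (k * u + l * v)"
    by (simp add: ac_simps)
  also have "\<dots> = 1"
    using assms(1-3) by (simp add: power_int_add power_int_mult)
  finally show ?thesis .
qed

lemma power_div_gcd_eq_one:
  fixes x :: "'a::monoid_mult"
  assumes "x ^ n = 1"
  shows "(x ^ k) ^ (n div gcd k n) = 1"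
proof -
  have "k * (n div gcd k n) = n * (k div gcd k n)"
    by (metis dvd_div_mult gcd_dvd1 gcd_dvd2 mult.commute)
  then show ?thesis
    by (metis assms power_mult power_one)
qed

lemma freshmans_dream_unit_circle:
  fixes w z :: "'a::comm_semiring_1"
  assumes "prime CHAR('a)" "q = CHAR('a) ^ m"
    and "w ^ (q + 1) = 1" "z ^ (q + 1) = 1"
  shows "(w + z) ^ q * (w * z) = w + z"
proof -
  have "(w + z) ^ q * (w * z) = w ^ (q + 1) * z + z ^ (q + 1) * w"
    using freshmans_dream'[OF assms(1,2)] by (simp add: algebra_simps)
  then show ?thesis
    using assms(3,4) by (simp add: add.commute)
qed

lemma finite_field_power_pred_power_Suc:
  fixes x :: "'a::{finite,field}"
  assumes "card (UNIV :: 'a set) = q ^ 2" "x \<noteq> 0"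
  shows "(x ^ (q - 1)) ^ (q + 1) = 1"
proof -
  have "(q - 1) * (q + 1) = q ^ 2 - 1"
    by (cases q) (simp_all add: power2_eq_square)
  then show ?thesis
    using finite_field_power_card_minus_one[OF assms(2)] assms(1) by (metis power_mult)
qed

lemma power_add_neq_zero_if_power_div_gcd_neq_one:
  fixes x b :: "'a::{finite,field}"
  assumes "CHAR('a) = 2" "x \<noteq> 0"
    and "b ^ ((card (UNIV :: 'a set) - 1) div gcd k (card (UNIV :: 'a set) - 1)) \<noteq> 1"
  shows "x ^ k + b \<noteq> 0"
proof
  assume "x ^ k + b = 0"
  then have "x ^ k = b"
    using uminus_CHAR_2[OF assms(1)] by (metis add_eq_0_iff)
  then show False
    using power_div_gcd_eq_one[OF finite_field_power_card_minus_one[OF assms(2)], where k = k] assms(3)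
    by simp
qed

text \<open>One direction of the Park--Lee/Zieve criterion for maps of the shape x^r h(x^n).\<close>

lemma inj_on_power_mult_comp_power:
  fixes h :: "'a::field \<Rightarrow> 'a"
  assumes "coprime r n"
    and "\<And>x. x \<noteq> 0 \<Longrightarrow> h (x ^ n) \<noteq> 0"
    and "inj_on (\<lambda>u. u ^ r * h u ^ n) ((\<lambda>x. x ^ n) ` (UNIV - {0}))"
  shows "inj_on (\<lambda>x. x ^ r * h (x ^ n)) (UNIV - {0})"
proof (rule inj_onI)
  fix x y :: 'a
  assume x: "x \<in> UNIV - {0}" and y: "y \<in> UNIV - {0}"
    and eq: "x ^ r * h (x ^ n) = y ^ r * h (y ^ n)"
  have "(x ^ n) ^ r * h (x ^ n) ^ n = (x ^ r * h (x ^ n)) ^ n" for x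
    by (simp add: power_mult_distrib flip: power_mult) (simp add: mult.commute)
  then have "(x ^ n) ^ r * h (x ^ n) ^ n = (y ^ n) ^ r * h (y ^ n) ^ n"
    using eq by simp
  then have xy_n: "x ^ n = y ^ n"
    using inj_onD[OF assms(3)] x y by blast
  moreover have "h (y ^ n) \<noteq> 0"
    using assms(2) y by blast
  ultimately have "x ^ r = y ^ r"
    using eq by simp
  with xy_n have "(x / y) powi int r = 1" "(x / y) powi int n = 1"
    using y by (simp_all add: power_divide)
  then have "x / y = 1"
    using power_int_eq_one_if_coprime[of "x / y" "int r" "int n"] assms(1) x y by simp
  then show "x = y"
    using y by simp
qed

lemma inj_on_unit_circle_power_mult:
  fixes b :: "'a::field"
  assumes "prime CHAR('a)" "q = CHAR('a) ^ m"
    and "b ^ (q + 1) = 1" "coprime (int r - int i) (int q + 1)"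
  shows "inj_on (\<lambda>u. u ^ r * (u ^ i + b) ^ (q - 1)) {u. u ^ (q + 1) = 1 \<and> u ^ i + b \<noteq> 0}"
proof (rule inj_onI)
  have q_pos: "q > 0"
    using assms(1,2) prime_gt_0_nat by simp
  have phi_times_eq: "u ^ r * (u ^ i + b) ^ (q - 1) * (u ^ i * b) = u ^ r"
    if "u ^ (q + 1) = 1" "u ^ i + b \<noteq> 0" for u :: 'a
  proof -
    have "(u ^ i) ^ (q + 1) = 1"
      using that(1) by (metis mult.commute power_mult power_one)
    then have "(u ^ i + b) ^ q * (u ^ i * b) = u ^ i + b"
      using freshmans_dream_unit_circle assms(1-3) by blast
    moreover have "(u ^ i + b) ^ q = (u ^ i + b) * (u ^ i + b) ^ (q - 1)"
      using q_pos by (simp flip: power_Suc)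
    ultimately have "(u ^ i + b) * ((u ^ i + b) ^ (q - 1) * (u ^ i * b)) = (u ^ i + b) * 1"
      by (simp add: mult.assoc)
    then have "(u ^ i + b) ^ (q - 1) * (u ^ i * b) = 1"
      using that(2) mult_left_cancel by blast
    then show ?thesis
      by (simp add: mult.assoc)
  qed
  fix u v :: 'a
  assume u: "u \<in> {u. u ^ (q + 1) = 1 \<and> u ^ i + b \<noteq> 0}" and v: "v \<in> {u. u ^ (q + 1) = 1 \<and> u ^ i + b \<noteq> 0}"
    and eq: "u ^ r * (u ^ i + b) ^ (q - 1) = v ^ r * (v ^ i + b) ^ (q - 1)"
  have nonzero: "u \<noteq> 0" "v \<noteq> 0" "b \<noteq> 0"
    using u v assms(3) by auto
  define c where "c = u ^ r * (u ^ i + b) ^ (q - 1)"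
  have cu: "c * (u ^ i * b) = u ^ r"
    unfolding c_def using u by (intro phi_times_eq) auto
  have cv: "c * (v ^ i * b) = v ^ r"
    unfolding c_def eq using v by (intro phi_times_eq) auto
  have "(u / v) ^ (q + 1) = 1"
    using u v by (simp add: power_divide)
  then have circle: "(u / v) powi (int q + 1) = 1"
    using power_int_of_nat[of "u / v" "q + 1"] by (simp add: add.commute)
  have "u ^ r * v ^ i = u ^ i * v ^ r"
    by (subst cu[symmetric], subst cv[symmetric]) (simp add: ac_simps)
  then have "(u / v) ^ r = (u / v) ^ i"
    using nonzero by (simp add: power_divide frac_eq_eq)
  then have "(u / v) powi (int r - int i) = 1"
    using nonzero by (simp add: power_int_diff)
  then have "u / v = 1"
    using power_int_eq_one_if_coprime[OF _ _ circle assms(4)] nonzero by simp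
  then show "u = v"
    using nonzero by simp
qed

lemma inj_on_power_mult_power_pred_add:
  fixes b :: "'a::{finite,field}"
  assumes "card (UNIV :: 'a set) = q ^ 2" "prime CHAR('a)" "q = CHAR('a) ^ m"
    and "b ^ (q + 1) = 1" "coprime (int r - int i) (int q + 1)" "coprime r (q - 1)"
    and "\<And>x. x \<noteq> 0 \<Longrightarrow> (x ^ (q - 1)) ^ i + b \<noteq> 0"
  shows "inj_on (\<lambda>x. x ^ r * ((x ^ (q - 1)) ^ i + b)) (UNIV - {0})"
proof (rule inj_on_power_mult_comp_power[where h = "\<lambda>u. u ^ i + b"])
  have "(\<lambda>x. x ^ (q - 1)) ` (UNIV - {0}) \<subseteq> {u. u ^ (q + 1) = 1 \<and> u ^ i + b \<noteq> 0}"
    using finite_field_power_pred_power_Suc[OF assms(1)] assms(7) by auto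
  then show "inj_on (\<lambda>u. u ^ r * (u ^ i + b) ^ (q - 1)) ((\<lambda>x. x ^ (q - 1)) ` (UNIV - {0}))"
    using inj_on_unit_circle_power_mult[OF assms(2-5)] by (rule inj_on_subset[rotated])
qed (use assms(6,7) in auto)

lemma bij_if_inj_on_nonzero:
  fixes g :: "'a::{finite,zero} \<Rightarrow> 'a"
  assumes "g 0 = 0" "\<And>x. x \<noteq> 0 \<Longrightarrow> g x \<noteq> 0" "inj_on g (UNIV - {0})"
  shows "bij g" "bij_betw g (UNIV - {0}) (UNIV - {0})"
proof -
  have "inj g"
  proof (rule injI)
    fix x y assume "g x = g y"
    then show "x = y"
      using assms by (cases "x = 0"; cases "y = 0") (auto dest: inj_onD)
  qed
  then show "bij g"
    using finite_UNIV_inj_surj[OF finite_UNIV] by (blast intro: bijI)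
  then show "bij_betw g (UNIV - {0}) (UNIV - {0})"
    using bij_betw_DiffI[OF _ bij_betw_singletonI[of g 0 0, OF assms(1)]] by simp
qed

theorem proposition4:
  fixes r i m :: nat and b :: "'a::{finite,field}"
  assumes card: "card (UNIV :: 'a set) = 2 ^ (2 * m)"
    and pos: "r > 0" "i > 0" "m > 0"
    and g1: "gcd (int r - int i) (2 ^ m + 1) = 1"
    and g2: "gcd r (i * (2 ^ m - 1)) = 1"
    and b0: "b \<noteq> 0"
    and b1: "b ^ ((2 ^ (2 * m) - 1) div gcd (i * (2 ^ m - 1)) (2 ^ (2 * m) - 1)) \<noteq> 1"
    and b2: "b ^ (2 ^ m + 1) = 1"
  defines "f \<equiv> monom 1 (i * (2 ^ m - 1) + r) + monom b r"
  shows "bij_betw (poly f) (UNIV - {0}) (UNIV - {0}) \<and> permutation_polynomial f"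
proof -
  define q :: nat where "q = 2 ^ m"
  have char: "CHAR('a) = 2"
    using card pos(3) by (intro CHAR_eq_2_if_even_card) simp
  have poly_f: "poly f = (\<lambda>x. x ^ r * ((x ^ (q - 1)) ^ i + b))"
    by (simp add: fun_eq_iff f_def q_def poly_monom power_add distrib_left ac_simps flip: power_mult)
  have nonvanishing: "(x ^ (q - 1)) ^ i + b \<noteq> 0" if "x \<noteq> 0" for x :: 'a
    using power_add_neq_zero_if_power_div_gcd_neq_one[OF char that, where k = "i * (q - 1)"] b1 card
    by (simp add: q_def mult.commute flip: power_mult)
  have "inj_on (poly f) (UNIV - {0})"
    unfolding poly_f
  proof (rule inj_on_power_mult_power_pred_add)
    show "card (UNIV :: 'a set) = q ^ 2" "prime CHAR('a)" "q = CHAR('a) ^ m"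
      using card char by (simp_all add: q_def power_even_eq)
    show "coprime (int r - int i) (int q + 1)"
      using g1 by (simp add: q_def coprime_iff_gcd_eq_1)
    show "coprime r (q - 1)"
      using g2 unfolding q_def by (metis coprime_iff_gcd_eq_1 coprime_mult_right_iff)
  qed (use b2 nonvanishing in \<open>simp_all add: q_def\<close>)
  moreover have "poly f 0 = 0" "\<And>x. x \<noteq> 0 \<Longrightarrow> poly f x \<noteq> 0"
    using pos(1) nonvanishing by (simp_all add: poly_f)
  ultimately show ?thesis
    using bij_if_inj_on_nonzero[of "poly f"] unfolding permutation_polynomial_def by simp
qed

end
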